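(* Let $h>0$, $\rho>0$, and $\lambda_1=\delta_1e^{\mathrm{i}\theta_1/2}$ with $\delta_1>0$, $\theta_1\in(0,\pi)$, and $\mu_\pm(\lambda_1)\neq0$, where $$\mu_+(\lambda)=\Big(\frac{2\mathrm{i}}{h\lambda}-\lambda\Big)\frac{1+\frac{\mathrm{i}h\rho^2}{2}}{1-\frac{\mathrm{i}h\rho^2}{2}},\qquad \mu_-(\lambda)=\frac{2\mathrm{i}}{h\lambda}+\lambda .$$ Let $e^{\mathrm{i}\Xi_{1,n}(t)}:=\left(\frac{\mu_+(\lambda_1)/\mu_-(\lambda_1)}{|\mu_+(\lambda_1)/\mu_-(\lambda_1)|}\right)^{n}\exp\!\Big(\mathrm{i}t\,\mathrm{Im}\Big[\frac{\mathrm{i}}{2}\Big(\frac{1}{\rho^2}-\rho^2\Big)-\frac{\mathrm{i}}{2}\Big(\lambda_1^2-\frac{1}{\lambda_1^2}\Big)\Big]\Big)$. Then $e^{\mathrm{i}\Xi_{1,n}(t)}=1$ for all $n\in\mathbb{Z}$, $t\in\mathbb{R}$ (equivalently: $\mu_+(\lambda_1)/\mu_-(\lambda_1)$ is a positive real number and $\rho^{-2}-\rho^2=(\delta_1^2-\delta_1^{-2})\cos\theta_1$) if and only if one of the following holds: (a) either ($\rho<1$ and $h>2/\rho^4$) or ($\rho>1$ and $0<h<2/\rho^4$), and $$\delta_1=\frac{1}{\rho}\sqrt{\frac{2}{h}},\qquad \cos\theta_1=\frac{2h(1-\rho^4)}{4-h^2\rho^4};$$ (b) $\rho=1$, $h=2$,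 $\delta_1=1$, and $\theta_1\in(\pi/2,\pi)$ (i.e. $\arg\lambda_1\in(\pi/4,\pi/2)$).
   Context: This condition characterizes when the one-breather solution on the nonzero constant background $(U,R,Q)=(\rho,\rho,\rho^{-1})$ of the semi-discrete MTM system has no periodic oscillations; $\mu_\pm$ are the multipliers of the two fundamental solutions $(\rho,-\lambda)^T\mu_+^n e^{\frac{\mathrm{i}}{2}(\rho^{-2}-\rho^2)t}$ and $(\lambda,\rho)^T\mu_-^n e^{\frac{\mathrm{i}}{2}(\lambda^2-\lambda^{-2})t}$ of the Lax pair at that background, and $\Xi_{1,n}$ is the imaginary part of the phase difference between them. *)

theory Defs
  imports Complex_Main
begin

text \<open>Multipliers of the two fundamental solutions of the Lax pair of the
semi-discrete MTM system at the constant background (rho, rho, 1/rho),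
with lattice step h.\<close>

definition mu_plus :: "real \<Rightarrow> real \<Rightarrow> complex \<Rightarrow> complex" where
  "mu_plus h \<rho> lam =
     (2 * \<i> / (of_real h * lam) - lam) *
     ((1 + \<i> * of_real h * of_real (\<rho>^2) / 2) / (1 - \<i> * of_real h * of_real (\<rho>^2) / 2))"

definition mu_minus :: "real \<Rightarrow> complex \<Rightarrow> complex" where
  "mu_minus h lam = 2 * \<i> / (of_real h * lam) + lam"

definition expiXi :: "real \<Rightarrow> real \<Rightarrow> complex \<Rightarrow> int \<Rightarrow> real \<Rightarrow> complex" where
  "expiXi h \<rho> lam n t =
     (let q = mu_plus h \<rho> lam / mu_minus h lam in
       (q / of_real (cmod q)) powi n *
       exp (\<i> * of_real (t * Im (\<i> / 2 * of_real (1 / \<rho>^2 - \<rho>^2)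
                                 - \<i> / 2 * (lam^2 - 1 / lam^2)))))"

end

(*
  Put p = \<rho>\<^sup>2, u = \<delta>\<^sub>1\<^sup>2, g = cos \<theta>\<^sub>1, so that \<lambda>\<^sub>1\<^sup>2 = u e^(i\<theta>\<^sub>1).  Clearing denominators,
  \<mu>\<^sub>+/\<mu>\<^sub>- = (2i - h\<lambda>\<^sub>1\<^sup>2)(2 + ihp) / ((2i + h\<lambda>\<^sub>1\<^sup>2)(2 - ihp)), and multiplying by the conjugate
  of the denominator turns "\<mu>\<^sub>+/\<mu>\<^sub>- is a positive real" into one polynomial equation and one
  polynomial inequality in (h, p, u, g); the vanishing of the frequency of \<Xi>\<^sub>1\<^sub>,\<^sub>n is a second
  equation.  The two equations combine to (hpu - 2)(hpu + 2)(u - p)(u + p) = 0.  The branch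
  u = p forces p = u = 1 and h = 2, with the inequality becoming cos \<theta>\<^sub>1 < 0.  On the branch
  hpu = 2 both equations say g(4 - h\<^sup>2p\<^sup>2) = 2h(1 - p\<^sup>2) and the inequality says
  (p\<^sup>2 - 1)(4 - h\<^sup>2p\<^sup>2) > 0; since g > -1 this is exactly the stated range of h.
*)
theory Submission
  imports Defs
begin

lemma divide_cmod_eq_1_iff:
  fixes z :: complex
  shows "z / of_real (cmod z) = 1 \<longleftrightarrow> Im z = 0 \<and> 0 < Re z"
proof
  assume z: "z / of_real (cmod z) = 1"
  then have "z \<noteq> 0" by auto
  with z have "z = of_real (cmod z)" by (simp add: divide_eq_eq)
  with \<open>z \<noteq> 0\<close> show "Im z = 0 \<and> 0 < Re z"
    by (metis Im_complex_of_real Re_complex_of_real zero_less_norm_iff)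
next
  assume "Im z = 0 \<and> 0 < Re z"
  then have "z = of_real (Re z)" "cmod z = Re z" by (simp_all add: complex_eq_iff cmod_def)
  then show "z / of_real (cmod z) = 1" using \<open>Im z = 0 \<and> 0 < Re z\<close>
    by (metis divide_self of_real_eq_0_iff order_less_irrefl)
qed

lemma powi_times_exp_eq_1_for_all_iff:
  fixes z :: complex and x :: real
  shows "(\<forall>n::int. \<forall>t::real. z powi n * exp (\<i> * of_real (t * x)) = 1) \<longleftrightarrow> z = 1 \<and> x = 0"
proof
  assume all: "\<forall>n::int. \<forall>t::real. z powi n * exp (\<i> * of_real (t * x)) = 1"
  from all[rule_format, of 1 0] have "z = 1" by simp
  moreover have "x = 0"
  proof (rule ccontr)
    assume "x \<noteq> 0"
    with all[rule_format, of 0 "pi / x"] have "exp (\<i> * of_real pi) = 1" by simp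
    then show False by (simp add: exp_pi_i')
  qed
  ultimately show "z = 1 \<and> x = 0" ..
qed simp

lemma cos_less_zero_iff:
  fixes x :: real
  assumes "0 < x" "x < pi"
  shows "cos x < 0 \<longleftrightarrow> pi / 2 < x"
proof
  assume "cos x < 0"
  show "pi / 2 < x"
  proof (rule ccontr)
    assume "\<not> pi / 2 < x"
    then have "0 \<le> cos x" using assms by (intro cos_ge_zero) auto
    with \<open>cos x < 0\<close> show False by simp
  qed
next
  assume "pi / 2 < x"
  then have "0 < cos (pi - x)" using assms by (intro cos_gt_zero_pi) auto
  then show "cos x < 0" by simp
qed

lemma square_of_half_angle:
  "(of_real \<delta> * exp (\<i> * of_real (\<theta> / 2)))^2 = of_real (\<delta>^2) * cis \<theta>"
proof -
  have "exp (\<i> * of_real (\<theta> / 2))^2 = exp (\<i> * of_real \<theta>)"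
    by (simp flip: exp_double)
  then show ?thesis by (simp add: power_mult_distrib cis_conv_exp)
qed

lemma two_i_minus_times_cnj_two_i_plus:
  fixes w :: complex and h :: real
  shows "(2 * \<i> - of_real h * w) * cnj (2 * \<i> + of_real h * w) =
    Complex (4 - h^2 * (cmod w)^2) (4 * h * Re w)"
  unfolding cmod_power2 by (simp add: complex_eq_iff algebra_simps power2_eq_square)

lemma mu_ratio_num_times_cnj_denom:
  fixes h p u \<theta> :: real
  assumes "u \<ge> 0"
  defines "w \<equiv> of_real u * cis \<theta>"
  shows "(2 * \<i> - of_real h * w) * (2 + \<i> * of_real (h * p)) *
      cnj ((2 * \<i> + of_real h * w) * (2 - \<i> * of_real (h * p))) =
    Complex ((4 - h^2 * u^2) * (4 - h^2 * p^2) - 16 * h^2 * p * u * cos \<theta>)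
            (4 * h * (p * (4 - h^2 * u^2) + u * cos \<theta> * (4 - h^2 * p^2)))"
proof -
  have "cnj (2 - \<i> * of_real (h * p)) = 2 + \<i> * of_real (h * p)"
    by (simp add: complex_eq_iff)
  then have "(2 * \<i> - of_real h * w) * (2 + \<i> * of_real (h * p)) *
      cnj ((2 * \<i> + of_real h * w) * (2 - \<i> * of_real (h * p))) =
    ((2 * \<i> - of_real h * w) * cnj (2 * \<i> + of_real h * w)) * (2 + \<i> * of_real (h * p))^2"
    by (simp only: complex_cnj_mult power2_eq_square mult_ac)
  also have "\<dots> = Complex (4 - h^2 * u^2) (4 * h * u * cos \<theta>) * Complex (4 - h^2 * p^2) (4 * h * p)"
    unfolding two_i_minus_times_cnj_two_i_plus using assms(1)
    by (simp add: w_def norm_mult complex_eq_iff power2_eq_square)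
  also have "\<dots> = Complex ((4 - h^2 * u^2) * (4 - h^2 * p^2) - 16 * h^2 * p * u * cos \<theta>)
            (4 * h * (p * (4 - h^2 * u^2) + u * cos \<theta> * (4 - h^2 * p^2)))"
    by (simp add: complex_eq_iff algebra_simps power2_eq_square)
  finally show ?thesis .
qed

lemma mu_ratio_eq:
  assumes "h \<noteq> 0" "lam \<noteq> 0"
  shows "mu_plus h \<rho> lam / mu_minus h lam =
    (2 * \<i> - of_real h * lam^2) * (2 + \<i> * of_real (h * \<rho>^2)) /
    ((2 * \<i> + of_real h * lam^2) * (2 - \<i> * of_real (h * \<rho>^2)))"
proof -
  have hl: "of_real h * lam \<noteq> 0" using assms by simp
  have "mu_plus h \<rho> lam = (2 * \<i> - of_real h * lam^2) / (of_real h * lam) *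
      ((2 + \<i> * of_real (h * \<rho>^2)) / (2 - \<i> * of_real (h * \<rho>^2)))"
    unfolding mu_plus_def using hl by (simp add: field_simps power2_eq_square)
  moreover have "mu_minus h lam = (2 * \<i> + of_real h * lam^2) / (of_real h * lam)"
    unfolding mu_minus_def using hl by (simp add: field_simps power2_eq_square)
  ultimately show ?thesis using hl by simp
qed

lemma mu_ratio_pos_real_iff:
  fixes h \<rho> u \<theta> :: real
  assumes "h > 0" "u > 0" and lam: "lam^2 = of_real u * cis \<theta>"
  defines "q \<equiv> mu_plus h \<rho> lam / mu_minus h lam" and "p \<equiv> \<rho>^2"
  shows "Im q = 0 \<and> 0 < Re q \<longleftrightarrow>
    p * (4 - h^2 * u^2) + u * cos \<theta> * (4 - h^2 * p^2) = 0 \<and>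
    0 < (4 - h^2 * u^2) * (4 - h^2 * p^2) - 16 * h^2 * p * u * cos \<theta>"
proof -
  have "lam \<noteq> 0" using assms(2) lam by auto
  then have q: "q = (2 * \<i> - of_real h * (of_real u * cis \<theta>)) * (2 + \<i> * of_real (h * p)) /
      ((2 * \<i> + of_real h * (of_real u * cis \<theta>)) * (2 - \<i> * of_real (h * p)))"
    unfolding q_def p_def lam[symmetric] using assms(1) by (simp add: mu_ratio_eq)
  show ?thesis
    unfolding q Im_complex_div_eq_0 Re_complex_div_gt_0
      mu_ratio_num_times_cnj_denom[OF less_imp_le[OF assms(2)]]
    using assms(1) by simp
qed

lemma Xi_frequency_eq:
  assumes "lam^2 = of_real u * cis \<theta>"
  shows "Im (\<i> / 2 * of_real (1 / \<rho>^2 - \<rho>^2) - \<i> / 2 * (lam^2 - 1 / lam^2)) =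
    ((1 / \<rho>^2 - \<rho>^2) - (u - 1 / u) * cos \<theta>) / 2"
proof -
  have "1 / lam^2 = of_real (1 / u) * cis (- \<theta>)"
    unfolding assms by (simp add: field_split_simps cis_inverse[symmetric] inverse_eq_divide)
  then show ?thesis unfolding assms by (simp add: algebra_simps)
qed

(* In terms of p = \<rho>\<^sup>2, u = \<delta>\<^sub>1\<^sup>2 and g = cos \<theta>\<^sub>1: the first two conditions say that
   \<mu>\<^sub>+/\<mu>\<^sub>- is a positive real (they are, up to the factor 4h, the imaginary and real part of
   its numerator times the conjugate denominator), the third that the frequency of \<Xi>\<^sub>1\<^sub>,\<^sub>n vanishes. *)

definition nonoscillation_conditions :: "real \<Rightarrow> real \<Rightarrow> real \<Rightarrow> real \<Rightarrow> bool" where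
  "nonoscillation_conditions h p u g \<longleftrightarrow>
     p * (4 - h^2 * u^2) + u * g * (4 - h^2 * p^2) = 0 \<and>
     0 < (4 - h^2 * u^2) * (4 - h^2 * p^2) - 16 * h^2 * p * u * g \<and>
     u * (1 - p^2) = (u^2 - 1) * g * p"

lemma nonoscillation_conditions_p_eq_1_iff:
  assumes "h > 0" "u > 0" "-1 < g"
  shows "nonoscillation_conditions h 1 u g \<longleftrightarrow> h = 2 \<and> u = 1 \<and> g < 0"
proof
  assume bc: "nonoscillation_conditions h 1 u g"
  then have I: "4 - h^2 * u^2 + u * g * (4 - h^2) = 0"
    and R: "0 < (4 - h^2 * u^2) * (4 - h^2) - 16 * h^2 * u * g"
    and E: "(u^2 - 1) * g = 0"
    unfolding nonoscillation_conditions_def by simp_all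
  have "g \<noteq> 0"
  proof
    assume "g = 0"
    with I have "h^2 * u^2 = 4" by simp
    with R \<open>g = 0\<close> show False by simp
  qed
  with E assms(2) have u: "u = 1" by (simp add: power2_eq_1_iff)
  with I have "(4 - h^2) * (1 + g) = 0" by (simp add: algebra_simps)
  with assms(3) have "h^2 = 4" by simp
  with assms(1) have h: "h = 2" by (metis less_imp_le real_sqrt_four real_sqrt_unique)
  from R u h have "g < 0" by simp
  with u h show "h = 2 \<and> u = 1 \<and> g < 0" by simp
next
  assume "h = 2 \<and> u = 1 \<and> g < 0"
  then show "nonoscillation_conditions h 1 u g" unfolding nonoscillation_conditions_def by simp
qed

lemma nonoscillation_conditions_imp_hpu_eq_2:
  assumes "h > 0" "p > 0" "u > 0" "-1 < g" "p \<noteq> 1"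
    and bc: "nonoscillation_conditions h p u g"
  shows "h * p * u = 2"
proof -
  from bc have I: "p * (4 - h^2 * u^2) + u * g * (4 - h^2 * p^2) = 0"
    and E: "u * (1 - p^2) = (u^2 - 1) * g * p"
    unfolding nonoscillation_conditions_def by simp_all
  have "(h * p * u - 2) * (h * p * u + 2) * (u - p) * (u + p) =
      - p * (u^2 - 1) * (p * (4 - h^2 * u^2) + u * g * (4 - h^2 * p^2))
      + u * (4 - h^2 * p^2) * ((u^2 - 1) * g * p - u * (1 - p^2))"
    by (simp add: algebra_simps power2_eq_square)
  also have "\<dots> = 0" using I E by simp
  finally have "(h * p * u - 2) * (h * p * u + 2) * (u - p) * (u + p) = 0" .
  moreover have "0 < h * p * u" using assms(1-3) by simp
  then have "h * p * u + 2 \<noteq> 0" "u + p \<noteq> 0" using assms(2,3) by linarith+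
  moreover have "u \<noteq> p"
  proof
    assume "u = p"
    then have "p * (1 - p^2) * (1 + g) = u * (1 - p^2) - (u^2 - 1) * g * p"
      by (simp add: algebra_simps power2_eq_square)
    with E have "p * (1 - p^2) * (1 + g) = 0" by simp
    with assms(2,4,5) show False by (simp add: power2_eq_1_iff)
  qed
  ultimately show ?thesis by simp
qed

lemma nonoscillation_conditions_on_hpu_eq_2_iff:
  assumes "h > 0" "p > 0" "p \<noteq> 1" and curve: "h * p * u = 2"
  defines "T \<equiv> 4 - h^2 * p^2"
  shows "nonoscillation_conditions h p u g \<longleftrightarrow> g * T = 2 * h * (1 - p^2) \<and> 0 < (p^2 - 1) * T"
proof -
  have u: "u = 2 / (h * p)" using curve assms(1,2) by (simp add: field_simps)
  have I: "h * p * (p * (4 - h^2 * u^2) + u * g * T) = 2 * (g * T - 2 * h * (1 - p^2))"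
    using assms(1,2) unfolding u by (simp add: field_simps power2_eq_square)
  have E: "h^2 * p * (u * (1 - p^2) - (u^2 - 1) * g * p) = 2 * h * (1 - p^2) - g * T"
    using assms(1,2) unfolding u T_def by (simp add: field_simps power2_eq_square)
  have R: "p^2 * T^2 * ((4 - h^2 * u^2) * T - 16 * h^2 * p * u * g) =
      4 * ((p^2 - 1) * T) * (T^2 + 16 * h^2 * p^2)" if "g * T = 2 * h * (1 - p^2)"
  proof -
    have "p^2 * T^2 * ((4 - h^2 * u^2) * T - 16 * h^2 * p * u * g) =
        (p^2 * ((4 - h^2 * u^2) * T - 16 * h^2 * p * u * g)) * T^2"
      by (simp add: algebra_simps)
    also have "\<dots> = (4 * (p^2 - 1) * T - 32 * h * p^2 * g) * T^2"
      using assms(1,2) unfolding u by (simp add: field_simps power2_eq_square)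
    also have "\<dots> = 4 * (p^2 - 1) * T^3 - 32 * h * p^2 * (g * T) * T"
      by (simp add: algebra_simps power2_eq_square power3_eq_cube)
    also have "\<dots> = 4 * ((p^2 - 1) * T) * (T^2 + 16 * h^2 * p^2)"
      unfolding that by (simp add: algebra_simps power2_eq_square power3_eq_cube)
    finally show ?thesis .
  qed
  have I_iff: "p * (4 - h^2 * u^2) + u * g * T = 0 \<longleftrightarrow> g * T = 2 * h * (1 - p^2)"
    using I assms(1,2) by (metis eq_iff_diff_eq_0 mult_eq_0_iff not_less_iff_gr_or_eq zero_neq_numeral)
  have E_iff: "u * (1 - p^2) = (u^2 - 1) * g * p \<longleftrightarrow> g * T = 2 * h * (1 - p^2)"
    using E assms(1,2) by (metis eq_iff_diff_eq_0 mult_eq_0_iff power_not_zero less_irrefl)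
  have R_iff: "0 < (4 - h^2 * u^2) * T - 16 * h^2 * p * u * g \<longleftrightarrow> 0 < (p^2 - 1) * T"
    if gT: "g * T = 2 * h * (1 - p^2)"
  proof -
    have "T \<noteq> 0" using gT assms(1-3) by (auto simp: power2_eq_1_iff)
    then have "0 < p^2 * T^2" using assms(2) by simp
    moreover have "0 < T^2 + 16 * h^2 * p^2" using assms(1,2) by (simp add: add_nonneg_pos)
    ultimately show ?thesis using R[OF gT]
      by (metis mult_pos_pos zero_less_mult_pos zero_less_mult_pos2 zero_less_numeral)
  qed
  show ?thesis
    unfolding nonoscillation_conditions_def T_def[symmetric] using I_iff E_iff R_iff by blast
qed

lemma h_range_imp_sign_pos:
  fixes h p :: real
  assumes "h > 0" "p > 0" and range: "(p < 1 \<and> 2 < h * p^2) \<or> (1 < p \<and> h * p^2 < 2)"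
  shows "0 < (p^2 - 1) * (4 - h^2 * p^2)"
  using range
proof
  assume p: "p < 1 \<and> 2 < h * p^2"
  then have "h * p^2 < h * p" using assms(1,2) by (simp add: power2_eq_square)
  with p have "2 < h * p" by linarith
  then have "2^2 < (h * p)^2" by (intro power_strict_mono) auto
  moreover have "p^2 < 1" using p assms(2) by (simp add: power_less_one_iff)
  ultimately show ?thesis by (simp add: power_mult_distrib mult_neg_neg)
next
  assume p: "1 < p \<and> h * p^2 < 2"
  then have "h * p < h * p^2" using assms(1,2) by (simp add: power2_eq_square)
  with p have "h * p < 2" by linarith
  then have "(h * p)^2 < 2^2" using assms(1,2) by (intro power_strict_mono) auto
  moreover have "1 < p^2" using p by (simp add: one_less_power)
  ultimately show ?thesis by (simp add: power_mult_distrib)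
qed

lemma sign_pos_imp_h_range:
  fixes h p g :: real
  assumes "h > 0" "p > 0" "-1 < g" and gT: "g * (4 - h^2 * p^2) = 2 * h * (1 - p^2)"
    and pos: "0 < (p^2 - 1) * (4 - h^2 * p^2)"
  shows "(p < 1 \<and> 2 < h * p^2) \<or> (1 < p \<and> h * p^2 < 2)"
proof -
  have "(g + 1) * (4 - h^2 * p^2) = g * (4 - h^2 * p^2) + (4 - h^2 * p^2)"
    by (simp add: algebra_simps)
  also have "\<dots> = (2 - h * p^2) * (h + 2)"
    unfolding gT by (simp add: algebra_simps power2_eq_square)
  finally have key: "(g + 1) * (4 - h^2 * p^2) = (2 - h * p^2) * (h + 2)" .
  from pos have "p \<noteq> 1" by auto
  then consider "1 < p" | "p < 1" by linarith
  then show ?thesis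
  proof cases
    case 1
    then have "1 < p^2" by (simp add: one_less_power)
    with pos have "0 < 4 - h^2 * p^2" by (simp add: zero_less_mult_iff)
    with key assms(3) have "0 < (2 - h * p^2) * (h + 2)"
      by (metis mult_pos_pos neg_less_iff_less diff_minus_eq_add diff_gt_0_iff_gt add.commute)
    with 1 assms(1) show ?thesis by (simp add: zero_less_mult_iff)
  next
    case 2
    then have "p^2 < 1" using assms(2) by (simp add: power_less_one_iff)
    with pos have "4 - h^2 * p^2 < 0" by (simp add: zero_less_mult_iff)
    with key assms(3) have "(2 - h * p^2) * (h + 2) < 0"
      by (metis mult_pos_neg diff_minus_eq_add diff_gt_0_iff_gt)
    with 2 assms(1) show ?thesis by (simp add: mult_less_0_iff)
  qed
qed

lemma nonoscillation_conditions_iff: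
  fixes h p u g :: real
  assumes "h > 0" "p > 0" "u > 0" "-1 < g"
  shows "nonoscillation_conditions h p u g \<longleftrightarrow>
    ((p < 1 \<and> h > 2 / p^2 \<or> p > 1 \<and> h < 2 / p^2) \<and> u = 2 / (h * p) \<and>
      g = 2 * h * (1 - p^2) / (4 - h^2 * p^2))
    \<or> (p = 1 \<and> h = 2 \<and> u = 1 \<and> g < 0)"
proof (cases "p = 1")
  case True
  then show ?thesis using nonoscillation_conditions_p_eq_1_iff[OF assms(1,3,4)] by simp
next
  case False
  define T where "T = 4 - h^2 * p^2"
  define range where "range \<longleftrightarrow> (p < 1 \<and> 2 < h * p^2) \<or> (1 < p \<and> h * p^2 < 2)"
  have "nonoscillation_conditions h p u g \<longleftrightarrow>
      h * p * u = 2 \<and> g * T = 2 * h * (1 - p^2) \<and> 0 < (p^2 - 1) * T"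
    using nonoscillation_conditions_imp_hpu_eq_2[OF assms False]
      nonoscillation_conditions_on_hpu_eq_2_iff[OF assms(1,2) False] unfolding T_def by blast
  also have "\<dots> \<longleftrightarrow> h * p * u = 2 \<and> g * T = 2 * h * (1 - p^2) \<and> range"
    using h_range_imp_sign_pos[OF assms(1,2)] sign_pos_imp_h_range[OF assms(1,2,4)]
    unfolding T_def range_def by blast
  also have "\<dots> \<longleftrightarrow> range \<and> u = 2 / (h * p) \<and> g = 2 * h * (1 - p^2) / T"
  proof -
    have "range \<Longrightarrow> T \<noteq> 0"
      using h_range_imp_sign_pos[OF assms(1,2)] unfolding T_def range_def by force
    moreover have "h * p * u = 2 \<longleftrightarrow> u = 2 / (h * p)" using assms(1,2) by (auto simp: field_simps)
    ultimately show ?thesis by (auto simp: field_simps)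
  qed
  also have "range \<longleftrightarrow> p < 1 \<and> h > 2 / p^2 \<or> p > 1 \<and> h < 2 / p^2"
    unfolding range_def using assms(2) by (simp add: field_simps)
  finally show ?thesis using False unfolding T_def by simp
qed

lemma expiXi_eq_1_iff_nonoscillation_conditions:
  fixes h \<rho> \<delta> \<theta> :: real
  assumes "h > 0" "\<rho> > 0" "\<delta> > 0" and lam: "lam = of_real \<delta> * exp (\<i> * of_real (\<theta> / 2))"
  shows "(\<forall>n::int. \<forall>t::real. expiXi h \<rho> lam n t = 1) \<longleftrightarrow>
    nonoscillation_conditions h (\<rho>^2) (\<delta>^2) (cos \<theta>)"
proof -
  define p u where "p = \<rho>^2" and "u = \<delta>^2"
  have "p > 0" "u > 0" using assms(2,3) by (simp_all add: p_def u_def)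
  have lam2: "lam^2 = of_real u * cis \<theta>" unfolding lam u_def by (rule square_of_half_angle)
  have "((1 / p - p) - (u - 1 / u) * cos \<theta>) / 2 = 0 \<longleftrightarrow>
      u * (1 - p^2) = (u^2 - 1) * cos \<theta> * p"
    using \<open>p > 0\<close> \<open>u > 0\<close> by (simp add: field_simps power2_eq_square)
  then show ?thesis
    unfolding expiXi_def Let_def powi_times_exp_eq_1_for_all_iff divide_cmod_eq_1_iff
      mu_ratio_pos_real_iff[OF assms(1) \<open>u > 0\<close> lam2] Xi_frequency_eq[OF lam2]
      nonoscillation_conditions_def
    by (simp add: p_def u_def)
qed

theorem mainTheorem8:
  fixes h \<rho> \<delta>\<^sub>1 \<theta>\<^sub>1 :: real and lam1 :: complex
  assumes "h > 0" and "\<rho> > 0" and "\<delta>\<^sub>1 > 0"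
    and "0 < \<theta>\<^sub>1" and "\<theta>\<^sub>1 < pi"
    and "lam1 = of_real \<delta>\<^sub>1 * exp (\<i> * of_real (\<theta>\<^sub>1 / 2))"
    and "mu_plus h \<rho> lam1 \<noteq> 0" and "mu_minus h lam1 \<noteq> 0"
  shows "(\<forall>n::int. \<forall>t::real. expiXi h \<rho> lam1 n t = 1) \<longleftrightarrow>
    ((((\<rho> < 1 \<and> h > 2 / \<rho>^4) \<or> (\<rho> > 1 \<and> h < 2 / \<rho>^4)) \<and>
       \<delta>\<^sub>1 = (1 / \<rho>) * sqrt (2 / h) \<and>
       cos \<theta>\<^sub>1 = 2 * h * (1 - \<rho>^4) / (4 - h^2 * \<rho>^4))
     \<or> (\<rho> = 1 \<and> h = 2 \<and> \<delta>\<^sub>1 = 1 \<and> pi / 2 < \<theta>\<^sub>1 \<and> \<theta>\<^sub>1 < pi))"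
proof -
  define p u where "p = \<rho>^2" and "u = \<delta>\<^sub>1^2"
  have "p > 0" "u > 0" using assms(2,3) by (simp_all add: p_def u_def)
  have "-1 < cos \<theta>\<^sub>1" using cos_monotone_0_pi[of \<theta>\<^sub>1 pi] assms(4,5) by simp
  have \<rho>: "\<rho> < 1 \<longleftrightarrow> p < 1" "\<rho> > 1 \<longleftrightarrow> p > 1" "\<rho> = 1 \<longleftrightarrow> p = 1"
    using assms(2) abs_square_le_1[of \<rho>] abs_square_less_1[of \<rho>] abs_square_eq_1[of \<rho>]
    unfolding p_def by auto
  have "\<rho>^4 = p^2" by (simp add: p_def flip: power_mult)
  have "0 \<le> (1 / \<rho>) * sqrt (2 / h)" using assms(1,2) by simp
  moreover have "((1 / \<rho>) * sqrt (2 / h))^2 = 2 / (h * p)"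
    using assms(1) by (simp add: p_def power_mult_distrib power_divide)
  ultimately have \<delta>: "\<delta>\<^sub>1 = (1 / \<rho>) * sqrt (2 / h) \<longleftrightarrow> u = 2 / (h * p)"
    using assms(3) unfolding u_def by (metis less_imp_le power2_eq_iff_nonneg)
  have "\<delta>\<^sub>1 = 1 \<longleftrightarrow> u = 1" using assms(3) unfolding u_def by (simp add: abs_square_eq_1)
  show ?thesis
    unfolding expiXi_eq_1_iff_nonoscillation_conditions[OF assms(1-3,6)] p_def[symmetric] u_def[symmetric]
      nonoscillation_conditions_iff[OF assms(1) \<open>p > 0\<close> \<open>u > 0\<close> \<open>-1 < cos \<theta>\<^sub>1\<close>]
      \<rho> \<open>\<rho>^4 = p^2\<close> \<delta> \<open>\<delta>\<^sub>1 = 1 \<longleftrightarrow> u = 1\<close> cos_less_zero_iff[OF assms(4,5)]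
    using assms(5) by blast
qed

end
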